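(* The Skolem Conjecture holds if and only if the following statement (S') holds: (S') Let $b$ be a nonzero integer and let $\mathbf u=\langle u_n\rangle_{n\in\mathbb Z}$ be a simple rational LRBS taking values in $\mathbb Z[\frac1b]$. Then $\mathbf u$ has no integer zero if and only if there exist an integer $N\ge1$ and primes $p_1,\dots,p_t$ coprime to $b$ with the following property: for every $\ell\in\{0,\dots,N-1\}$ there is an $i$ such that the sequence $\langle u_{Nn+\ell}\rangle_{n\in\mathbb Z}$ has no $p_i$-adic zero.
   Context: A rational linear recurrent bi-sequence (LRBS) is a bi-infinite sequence $\langle u_n\rangle_{n\in\mathbb Z}$ of rationals satisfying $u_{n+d}=a_{d-1}u_{n+d-1}+\dots+a_0u_n$ for all $n\in\mathbb Z$, with rational $a_i$ and $a_0\neq0$. It is simple if the characteristic polynomial of its minimal-order recurrence has no repeated roots. An integer zero is an $n\in\mathbb Z$ with $u_n=0$. For a prime $p$ not dividing $b$ and a sequence $\langle w_n\rangle_{n\in\mathbb Z}$ with values in $\mathbb Z[\frac1b]$, a $p$-adic zero of $\mathbf w$ is an $x\in\mathbb Z_p$ for which there exist integers $n_1,n_2,\dots$ with $v_p(w_{n_r})\ge r$ and $n_r\equiv x \pmod{p^r\mathbb Z_p}$ for all $r\ge1$. Skolem Conjecture: for every nonzero integer $b$ and every simple rational LRBS $\mathbf u$ with values in $\mathbb Z[\frac1b]$, $\mathbf u$ has no integer zero if and only if there is an integer $m\ge2$ with $\gcd(b,m)=1$ such that $u_n\not\equiv0\pmod m$ for all $n\in\mathbb Z$. *)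

theory Defs
  imports Complex_Main "HOL-Computational_Algebra.Polynomial" "HOL-Number_Theory.Cong"
begin

definition lin_rec :: "(int \<Rightarrow> rat) \<Rightarrow> nat \<Rightarrow> (nat \<Rightarrow> rat) \<Rightarrow> bool" where
  "lin_rec u d a \<longleftrightarrow> (\<forall>n::int. u (n + int d) = (\<Sum>i<d. a i * u (n + int i)))"

definition char_poly :: "nat \<Rightarrow> (nat \<Rightarrow> rat) \<Rightarrow> rat poly" where
  "char_poly d a = monom 1 d - (\<Sum>i<d. monom (a i) i)"

definition is_LRBS :: "(int \<Rightarrow> rat) \<Rightarrow> bool" where
  "is_LRBS u \<longleftrightarrow> (\<exists>d a. 0 < d \<and> a 0 \<noteq> 0 \<and> lin_rec u d a)"

definition simple_LRBS :: "(int \<Rightarrow> rat) \<Rightarrow> bool" where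
  "simple_LRBS u \<longleftrightarrow> is_LRBS u \<and>
     (\<exists>d a. lin_rec u d a \<and> (\<forall>d' a'. lin_rec u d' a' \<longrightarrow> d \<le> d') \<and>
        rsquarefree (map_poly (\<lambda>q. of_rat q :: complex) (char_poly d a)))"

definition values_in_Zb :: "int \<Rightarrow> (int \<Rightarrow> rat) \<Rightarrow> bool" where
  "values_in_Zb b u \<longleftrightarrow> (\<forall>n. \<exists>(x::int) (k::nat). u n = of_int x / of_int b ^ k)"

definition zero_mod :: "int \<Rightarrow> rat \<Rightarrow> bool" where
  "zero_mod m q \<longleftrightarrow> (\<exists>x y::int. coprime y m \<and> q = of_int x / of_int y \<and> m dvd x)"

definition vp_ge :: "nat \<Rightarrow> rat \<Rightarrow> nat \<Rightarrow> bool" where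
  "vp_ge p q r \<longleftrightarrow> zero_mod (int p ^ r) q"

(* p-adic integers represented as compatible sequences of residues c r \<in> {0..<p^r}
   (the inverse limit of Z/p^r Z); x \<equiv> c r (mod p^r Z_p) *)
definition padic_int :: "nat \<Rightarrow> (nat \<Rightarrow> int) \<Rightarrow> bool" where
  "padic_int p c \<longleftrightarrow> (\<forall>r. 0 \<le> c r \<and> c r < int p ^ r \<and> [c (Suc r) = c r] (mod int p ^ r))"

definition is_padic_zero :: "nat \<Rightarrow> (int \<Rightarrow> rat) \<Rightarrow> (nat \<Rightarrow> int) \<Rightarrow> bool" where
  "is_padic_zero p w c \<longleftrightarrow> padic_int p c \<and>
     (\<exists>ns :: nat \<Rightarrow> int. \<forall>r\<ge>1. vp_ge p (w (ns r)) r \<and> [ns r = c r] (mod int p ^ r))"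

definition has_padic_zero :: "nat \<Rightarrow> (int \<Rightarrow> rat) \<Rightarrow> bool" where
  "has_padic_zero p w \<longleftrightarrow> (\<exists>c. is_padic_zero p w c)"

definition Skolem_Conjecture :: bool where
  "Skolem_Conjecture \<longleftrightarrow>
    (\<forall>(b::int) (u::int \<Rightarrow> rat). b \<noteq> 0 \<longrightarrow> simple_LRBS u \<longrightarrow> values_in_Zb b u \<longrightarrow>
      ((\<forall>n. u n \<noteq> 0) \<longleftrightarrow> (\<exists>m::int. m \<ge> 2 \<and> coprime b m \<and> (\<forall>n. \<not> zero_mod m (u n)))))"

definition S' :: bool where
  "S' \<longleftrightarrow>
    (\<forall>(b::int) (u::int \<Rightarrow> rat). b \<noteq> 0 \<longrightarrow> simple_LRBS u \<longrightarrow> values_in_Zb b u \<longrightarrow>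
      ((\<forall>n. u n \<noteq> 0) \<longleftrightarrow>
        (\<exists>(N::nat) (ps::nat list). N \<ge> 1 \<and> (\<forall>p\<in>set ps. prime p \<and> coprime (int p) b) \<and>
           (\<forall>l<N. \<exists>p\<in>set ps. \<not> has_padic_zero p (\<lambda>n. u (int N * n + int l))))))"

end

theory Submission
  imports Defs
begin

text \<open>
  Both statements say that \<open>u\<close> has no integer zero iff a certain certificate exists, so it
  suffices that the two kinds of certificate exist for the same LRBS \<open>u\<close> with values in \<open>\<int>[1/b]\<close>.

  Let \<open>m\<close> be coprime to \<open>b\<close> with \<open>u n \<noteq> 0 mod m\<close> for all \<open>n\<close>. Over the localisation of \<open>\<int>\<close> at
  the primes of \<open>m\<close>, a principal ideal domain, the shifts of \<open>u\<close> span a finitely generated module,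
  because a solution of the recurrence is determined by \<open>d\<close> consecutive values. This module has
  only finitely many residues modulo \<open>m\<close>, so \<open>u\<close> is periodic modulo \<open>m\<close>. For a period \<open>N\<close> and
  each \<open>l < N\<close> some prime power \<open>p\<^sup>e\<close> dividing \<open>m\<close> does not divide \<open>u l\<close>, hence divides no
  \<open>u (N n + l)\<close>, and so \<open>n \<mapsto> u (N n + l)\<close> has no \<open>p\<close>-adic zero.

  Conversely, by Koenig's lemma a sequence without \<open>p\<close>-adic zero has bounded \<open>p\<close>-adic valuation.
  If \<open>v\<^sub>p\<^sub>l (u (N n + l)) < r\<^sub>l\<close> for all \<open>n\<close> and \<open>l < N\<close>, then \<open>m = \<Prod>\<^sub>l\<^sub><\<^sub>N p\<^sub>l ^ r\<^sub>l\<close> is a modulus.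
\<close>

text \<open>\<open>Zloc m\<close> is the localisation of \<open>\<int>\<close> at the primes dividing \<open>m\<close>; \<open>zero_mod m q\<close> means
  \<open>q \<in> m \<cdot> Zloc m\<close> (lemma \<open>zero_mod_iff_Zloc\<close>).\<close>

definition Zloc :: "int \<Rightarrow> rat set" where
  "Zloc m = {q. \<exists>x y::int. coprime y m \<and> q = of_int x / of_int y}"

lemma ZlocI: "coprime y m \<Longrightarrow> of_int x / of_int y \<in> Zloc m"
  unfolding Zloc_def by blast

lemma ZlocE:
  assumes "q \<in> Zloc m"
  obtains x y where "coprime y m" "q = of_int x / of_int y"
  using assms unfolding Zloc_def by blast

lemma Zloc_of_int [simp]: "of_int z \<in> Zloc m"
  using ZlocI[of 1 m z] by simp

lemma Zloc_0 [simp]: "0 \<in> Zloc m"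
  using Zloc_of_int[of 0] by simp

lemma Zloc_mult:
  assumes "q \<in> Zloc m" "q' \<in> Zloc m"
  shows "q * q' \<in> Zloc m"
proof -
  obtain x y x' y' where "coprime y m" "q = of_int x / of_int y" "coprime y' m" "q' = of_int x' / of_int y'"
    using assms by (meson ZlocE)
  then show ?thesis using ZlocI[of "y * y'" m "x * x'"] by simp
qed

lemma Zloc_uminus: "q \<in> Zloc m \<Longrightarrow> - q \<in> Zloc m"
  using Zloc_mult[OF Zloc_of_int[of "- 1"]] by simp

lemma Zloc_add:
  assumes "q \<in> Zloc m" "q' \<in> Zloc m"
  shows "q + q' \<in> Zloc m"
proof -
  obtain x y x' y' where q: "coprime y m" "q = of_int x / of_int y"
    and q': "coprime y' m" "q' = of_int x' / of_int y'"
    using assms by (meson ZlocE)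
  show ?thesis
  proof (cases "y = 0 \<or> y' = 0")
    case True
    then show ?thesis using assms q q' by auto
  next
    case False
    then have "q + q' = of_int (x * y' + x' * y) / of_int (y * y')"
      using q q' by (simp add: field_simps)
    moreover have "coprime (y * y') m"
      using q q' by simp
    ultimately show ?thesis by (simp only: ZlocI)
  qed
qed

lemma Zloc_diff: "q \<in> Zloc m \<Longrightarrow> q' \<in> Zloc m \<Longrightarrow> q - q' \<in> Zloc m"
  using Zloc_add[OF _ Zloc_uminus] by fastforce

lemma zero_mod_iff_Zloc: "zero_mod m q \<longleftrightarrow> (\<exists>z\<in>Zloc m. q = of_int m * z)"
proof
  assume "zero_mod m q"
  then obtain x y where "coprime y m" "q = of_int x / of_int y" "m dvd x"
    unfolding zero_mod_def by blast
  moreover from \<open>m dvd x\<close> obtain k where "x = m * k" ..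
  ultimately show "\<exists>z\<in>Zloc m. q = of_int m * z"
    by (intro bexI[of _ "of_int k / of_int y"] ZlocI) auto
next
  assume "\<exists>z\<in>Zloc m. q = of_int m * z"
  then obtain z x y where "q = of_int m * z" "coprime y m" "z = of_int x / of_int y"
    by (blast elim: ZlocE)
  then show "zero_mod m q"
    unfolding zero_mod_def by (intro exI[of _ "m * x"] exI[of _ y]) auto
qed

lemma zero_mod_0 [simp]: "zero_mod m 0"
  unfolding zero_mod_iff_Zloc by (intro bexI[of _ 0]) auto

lemma zero_mod_1 [simp]: "zero_mod 1 q"
proof -
  obtain x y where "quotient_of q = (x, y)"
    by fastforce
  then have "q = of_int x / of_int y"
    by (rule quotient_of_div)
  then show ?thesis unfolding zero_mod_def by auto
qed

lemma zero_mod_diff: "zero_mod m q \<Longrightarrow> zero_mod m q' \<Longrightarrow> zero_mod m (q - q')"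
  unfolding zero_mod_iff_Zloc by (auto intro!: bexI[OF _ Zloc_diff] simp: right_diff_distrib)

lemma zero_mod_add: "zero_mod m q \<Longrightarrow> zero_mod m q' \<Longrightarrow> zero_mod m (q + q')"
  using zero_mod_diff[of m q "- q'"] zero_mod_diff[of m 0 q'] by simp

lemma zero_mod_dvd_modulus:
  assumes "zero_mod m q" "d dvd m"
  shows "zero_mod d q"
proof -
  obtain x y where "coprime y m" "q = of_int x / of_int y" "m dvd x"
    using assms(1) unfolding zero_mod_def by blast
  moreover have "coprime y d"
    using \<open>coprime y m\<close> assms(2) coprime_divisors dvd_refl by blast
  moreover have "d dvd x"
    using assms(2) \<open>m dvd x\<close> by (rule dvd_trans)
  ultimately show ?thesis unfolding zero_mod_def by blast
qed

lemma zero_mod_imp_dvd_numerator: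
  assumes "zero_mod m q" "q = of_int x / of_int y" "coprime y m" "y \<noteq> 0"
  shows "m dvd x"
proof -
  obtain x' y' where q: "coprime y' m" "q = of_int x' / of_int y'" "m dvd x'"
    using assms(1) unfolding zero_mod_def by auto
  show ?thesis
  proof (cases "y' = 0")
    case True
    then show ?thesis using q assms by simp
  next
    case False
    then have "of_int (x * y') = (of_int (x' * y) :: rat)"
      using q assms by (simp add: field_simps)
    then have "m dvd x * y'"
      using q(3) by (metis dvd_mult2 of_int_eq_iff)
    then show ?thesis using q(1) by (simp add: coprime_commute coprime_dvd_mult_left_iff)
  qed
qed

definition Zloc_module :: "int \<Rightarrow> ('a \<Rightarrow> rat) set \<Rightarrow> bool" where
  "Zloc_module m S \<longleftrightarrow> (\<lambda>_. 0) \<in> S \<and>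
     (\<forall>w\<in>S. \<forall>w'\<in>S. (\<lambda>x. w x + w' x) \<in> S) \<and>
     (\<forall>c\<in>Zloc m. \<forall>w\<in>S. (\<lambda>x. c * w x) \<in> S) \<and>
     (\<forall>w\<in>S. \<forall>x. w x \<in> Zloc m)"

lemma
  assumes "Zloc_module m S"
  shows Zloc_module_zero: "(\<lambda>_. 0) \<in> S"
    and Zloc_module_add: "w \<in> S \<Longrightarrow> w' \<in> S \<Longrightarrow> (\<lambda>x. w x + w' x) \<in> S"
    and Zloc_module_smult: "c \<in> Zloc m \<Longrightarrow> w \<in> S \<Longrightarrow> (\<lambda>x. c * w x) \<in> S"
    and Zloc_module_values: "w \<in> S \<Longrightarrow> w x \<in> Zloc m"
  using assms unfolding Zloc_module_def by blast+

lemma Zloc_ideal_principal: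
  assumes zero: "0 \<in> I"
    and add: "\<And>q q'. q \<in> I \<Longrightarrow> q' \<in> I \<Longrightarrow> q + q' \<in> I"
    and mult: "\<And>a q. a \<in> Zloc m \<Longrightarrow> q \<in> I \<Longrightarrow> a * q \<in> I"
    and sub: "I \<subseteq> Zloc m"
  shows "\<exists>g\<in>I. \<forall>q\<in>I. \<exists>a\<in>Zloc m. q = a * g"
proof (cases "I \<subseteq> {0}")
  case True
  then show ?thesis using zero by (intro bexI[of _ 0] ballI bexI[OF _ Zloc_0]) auto
next
  case False
  have numerator: "of_int x \<in> I" if "of_int x / of_int y \<in> I" "y \<noteq> 0" for x y
    using mult[OF Zloc_of_int that(1), of y] that(2) by simp
  obtain q where "q \<in> I" "q \<noteq> 0" using False by blast
  moreover obtain x y where "q = of_int x / of_int y"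
    using ZlocE[OF subsetD[OF sub \<open>q \<in> I\<close>]] by blast
  ultimately have "of_int x / of_int y \<in> I" "x \<noteq> 0" "y \<noteq> 0"
    by auto
  then have "of_int x \<in> I" "of_int (- x) \<in> I"
    using numerator mult[OF Zloc_of_int[of "- 1"]] by auto
  then have "of_nat (nat \<bar>x\<bar>) \<in> I" "0 < nat \<bar>x\<bar>"
    using \<open>x \<noteq> 0\<close> by (auto simp: abs_if)
  define g where "g = (LEAST g::nat. 0 < g \<and> of_nat g \<in> I)"
  have "0 < g \<and> of_nat g \<in> I"
    unfolding g_def by (rule LeastI) (use \<open>of_nat (nat \<bar>x\<bar>) \<in> I\<close> \<open>0 < nat \<bar>x\<bar>\<close> in blast)
  then have g: "0 < g" "of_nat g \<in> I"
    by simp_all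
  have g_least: "g \<le> k" if "0 < k" "of_nat k \<in> I" for k
    unfolding g_def using that by (simp add: Least_le)
  show ?thesis
  proof (intro bexI[OF _ g(2)] ballI)
    fix q assume "q \<in> I"
    then obtain x y where xy: "coprime y m" "q = of_int x / of_int y"
      using ZlocE[OF subsetD[OF sub]] by blast
    show "\<exists>a\<in>Zloc m. q = a * of_nat g"
    proof (cases "y = 0")
      case True
      then show ?thesis using xy by (intro bexI[of _ 0]) auto
    next
      case False
      have "of_int x \<in> I"
        using numerator \<open>q \<in> I\<close> xy(2) False by simp
      then have "of_int x + of_int (- (x div int g)) * of_nat g \<in> I"
        by (intro add mult Zloc_of_int g(2))
      moreover have "of_int x + of_int (- (x div int g)) * (of_nat g :: rat) = of_int (x mod int g)"
        by (simp add: minus_div_mult_eq_mod[symmetric] algebra_simps)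
      ultimately have rem: "of_int (x mod int g) \<in> I"
        by simp
      have "x mod int g = 0"
      proof (rule ccontr)
        assume "x mod int g \<noteq> 0"
        moreover have "0 \<le> x mod int g" "x mod int g < int g"
          using g(1) by simp_all
        ultimately have pos: "0 < nat (x mod int g)" and less: "nat (x mod int g) < g"
          by linarith+
        have "of_nat (nat (x mod int g)) \<in> I"
          using rem g(1) by simp
        then show False
          using g_least[OF pos] less by simp
      qed
      then obtain k where "x = int g * k" by auto
      then have "q = of_int k / of_int y * of_nat g" using xy by simp
      then show ?thesis using xy(1) ZlocI by blast
    qed
  qed
qed

lemma Zloc_module_eval_principal:
  assumes "Zloc_module m S"
  shows "\<exists>s\<in>S. \<forall>w\<in>S. \<exists>a\<in>Zloc m. w t = a * s t"
proof -
  have "\<exists>g\<in>(\<lambda>w. w t) ` S. \<forall>q\<in>(\<lambda>w. w t) ` S. \<exists>a\<in>Zloc m. q = a * g"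
  proof (rule Zloc_ideal_principal)
    show "0 \<in> (\<lambda>w. w t) ` S"
      using Zloc_module_zero[OF assms] by force
    show "q + q' \<in> (\<lambda>w. w t) ` S" if "q \<in> (\<lambda>w. w t) ` S" "q' \<in> (\<lambda>w. w t) ` S" for q q'
      using that Zloc_module_add[OF assms] by (auto intro!: image_eqI)
    show "a * q \<in> (\<lambda>w. w t) ` S" if "a \<in> Zloc m" "q \<in> (\<lambda>w. w t) ` S" for a q
      using that Zloc_module_smult[OF assms] by (auto intro!: image_eqI)
    show "(\<lambda>w. w t) ` S \<subseteq> Zloc m"
      using Zloc_module_values[OF assms] by auto
  qed
  then show ?thesis by blast
qed

lemma Zloc_module_vanishing_at:
  "Zloc_module m S \<Longrightarrow> Zloc_module m {w\<in>S. w t = 0}"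
  unfolding Zloc_module_def by auto

lemma Zloc_module_sum:
  fixes n :: nat
  assumes "Zloc_module m S" "\<forall>i<n. g i \<in> S" "\<forall>i<n. c i \<in> Zloc m"
  shows "(\<lambda>x. \<Sum>i<n. c i * g i x) \<in> S"
  using assms(2,3)
proof (induction n)
  case 0
  then show ?case using Zloc_module_zero[OF assms(1)] by simp
next
  case (Suc n)
  then show ?case
    using Zloc_module_add[OF assms(1)] Zloc_module_smult[OF assms(1)] by simp
qed

lemma Zloc_module_finitely_generated:
  assumes "finite F" "Zloc_module m S" "\<forall>w\<in>S. (\<forall>x\<in>F. w x = 0) \<longrightarrow> w = (\<lambda>_. 0)"
  shows "\<exists>(n::nat) g. (\<forall>i<n. g i \<in> S) \<and>
           (\<forall>w\<in>S. \<exists>c. (\<forall>i<n. c i \<in> Zloc m) \<and> w = (\<lambda>x. \<Sum>i<n. c i * g i x))"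
  using assms
proof (induction F arbitrary: S rule: finite_induct)
  case empty
  then show ?case by (intro exI[of _ 0]) auto
next
  case (insert t F S)
  obtain s where s: "s \<in> S" "\<forall>w\<in>S. \<exists>a\<in>Zloc m. w t = a * s t"
    using Zloc_module_eval_principal[OF insert.prems(1)] by blast
  let ?K = "{w\<in>S. w t = 0}"
  have "\<exists>(n::nat) g. (\<forall>i<n. g i \<in> ?K) \<and>
          (\<forall>w\<in>?K. \<exists>c. (\<forall>i<n. c i \<in> Zloc m) \<and> w = (\<lambda>x. \<Sum>i<n. c i * g i x))"
    by (rule insert.IH[OF Zloc_module_vanishing_at[OF insert.prems(1)]]) (use insert.prems(2) in auto)
  then obtain n :: nat and g where g: "\<forall>i<n. g i \<in> ?K"
    and g_span: "\<forall>w\<in>?K. \<exists>c. (\<forall>i<n. c i \<in> Zloc m) \<and> w = (\<lambda>x. \<Sum>i<n. c i * g i x)"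
    by blast
  define g' where "g' i = (if i < n then g i else s)" for i
  show ?case
  proof (intro exI[of _ "Suc n"] exI[of _ g'] conjI ballI allI impI)
    fix i assume "i < Suc n"
    then show "g' i \<in> S" using g s(1) unfolding g'_def by auto
  next
    fix w assume "w \<in> S"
    then obtain a where a: "a \<in> Zloc m" "w t = a * s t" using s by blast
    have "(\<lambda>x. w x + - a * s x) \<in> S"
      using Zloc_module_add[OF insert.prems(1) \<open>w \<in> S\<close> Zloc_module_smult[OF insert.prems(1) Zloc_uminus[OF a(1)] s(1)]] .
    then have "(\<lambda>x. w x + - a * s x) \<in> ?K"
      using a(2) by simp
    then obtain c where c: "\<forall>i<n. c i \<in> Zloc m" "(\<lambda>x. w x + - a * s x) = (\<lambda>x. \<Sum>i<n. c i * g i x)"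
      using g_span by blast
    define c' where "c' i = (if i < n then c i else a)" for i
    have "w x = (\<Sum>i<Suc n. c' i * g' i x)" for x
    proof -
      have "(\<Sum>i<n. c' i * g' i x) = (\<Sum>i<n. c i * g i x)"
        by (rule sum.cong) (simp_all add: c'_def g'_def)
      then show ?thesis
        using fun_cong[OF c(2), of x] by (simp add: c'_def g'_def)
    qed
    moreover have "\<forall>i<Suc n. c' i \<in> Zloc m"
      using c a unfolding c'_def by auto
    ultimately show "\<exists>c. (\<forall>i<Suc n. c i \<in> Zloc m) \<and> w = (\<lambda>x. \<Sum>i<Suc n. c i * g' i x)"
      by blast
  qed
qed

inductive_set shift_span :: "(int \<Rightarrow> rat) \<Rightarrow> int \<Rightarrow> (int \<Rightarrow> rat) set"
  for u :: "int \<Rightarrow> rat" and m :: int where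
  shift: "(\<lambda>x. u (x + k)) \<in> shift_span u m"
| zero: "(\<lambda>_. 0) \<in> shift_span u m"
| add: "w \<in> shift_span u m \<Longrightarrow> w' \<in> shift_span u m \<Longrightarrow> (\<lambda>x. w x + w' x) \<in> shift_span u m"
| smult: "c \<in> Zloc m \<Longrightarrow> w \<in> shift_span u m \<Longrightarrow> (\<lambda>x. c * w x) \<in> shift_span u m"

lemma Zloc_module_shift_span:
  assumes "\<forall>x. u x \<in> Zloc m"
  shows "Zloc_module m (shift_span u m)"
proof -
  have "w x \<in> Zloc m" if "w \<in> shift_span u m" for w x
    using that by (induction arbitrary: x) (auto simp: assms Zloc_add Zloc_mult)
  then show ?thesis
    unfolding Zloc_module_def by (auto intro: shift_span.intros)
qed

lemma lin_rec_shift_span: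
  assumes "w \<in> shift_span u m" "lin_rec u d a"
  shows "lin_rec w d a"
  using assms
proof (induction)
  case (shift k)
  have "u (n + k + int d) = (\<Sum>i<d. a i * u (n + k + int i))" for n
    using shift unfolding lin_rec_def by blast
  then show ?case unfolding lin_rec_def by (simp add: ac_simps)
next
  case zero
  then show ?case by (simp add: lin_rec_def)
next
  case (add w w')
  then show ?case by (simp add: lin_rec_def sum.distrib algebra_simps)
next
  case (smult c w)
  then show ?case by (simp add: lin_rec_def sum_distrib_left algebra_simps)
qed

lemma lin_rec_eq_0_if_initial_values_0:
  assumes rec: "lin_rec w d a" and "0 < d" "a 0 \<noteq> 0"
    and window: "\<forall>j<d. w (int j) = 0"
  shows "w x = 0"
proof -
  obtain d' where d: "d = Suc d'" using \<open>0 < d\<close> not0_implies_Suc by blast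
  define inner where "inner n \<longleftrightarrow> (\<forall>j<d'. w (n + 1 + int j) = 0)" for n
  define zero_from where "zero_from n \<longleftrightarrow> (\<forall>j<d. w (n + int j) = 0)" for n
  have step: "inner n \<Longrightarrow> w (n + int d) = a 0 * w n" for n
    using rec unfolding lin_rec_def d sum.lessThan_Suc_shift inner_def by (simp add: add.assoc)
  have lower: "zero_from n \<longleftrightarrow> w n = 0 \<and> inner n" for n
    unfolding zero_from_def inner_def d All_less_Suc2 by (simp add: add.assoc)
  have upper: "zero_from (n + 1) \<longleftrightarrow> inner n \<and> w (n + int d) = 0" for n
    unfolding zero_from_def inner_def d All_less_Suc by (auto simp: add.assoc)
  have "zero_from n" for n
  proof (induction n rule: int_induct[where k = 0])
    case base
    then show ?case using window unfolding zero_from_def by simp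
  next
    case (step1 n)
    then have "w n = 0" "inner n"
      using lower by blast+
    then show ?case
      using upper step by simp
  next
    case (step2 n)
    then have "inner (n - 1)" "w (n - 1 + int d) = 0"
      using upper[of "n - 1"] by simp_all
    then show ?case
      using lower step \<open>a 0 \<noteq> 0\<close> by simp
  qed
  then show ?thesis using lower[of x] by blast
qed

lemma Zloc_residue:
  assumes "c \<in> Zloc m" "0 < m"
  shows "\<exists>r z. 0 \<le> r \<and> r < m \<and> z \<in> Zloc m \<and> c = of_int r + of_int m * z"
proof -
  obtain x y where xy: "coprime y m" "c = of_int x / of_int y"
    using assms(1) by (rule ZlocE)
  show ?thesis
  proof (cases "y = 0")
    case True
    then show ?thesis using xy assms(2) by (intro exI[of _ 0] exI[of _ 0]) auto
  next
    case False
    obtain y' where y': "[y * y' = 1] (mod m)"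
      using xy(1) coprime_iff_invertible_int by blast
    define r where "r = (x * y') mod m"
    have "[r * y = x] (mod m)"
      using y' unfolding r_def cong_def by (metis mod_mult_left_eq mod_mult_right_eq mult.assoc mult.commute mult.right_neutral)
    then obtain k where k: "x = r * y + m * k"
      by (metis cong_iff_lin cong_sym mult.commute)
    then have "c = of_int r + of_int m * (of_int k / of_int y)"
      using xy(2) False by (simp add: field_simps)
    moreover have "0 \<le> r" "r < m" unfolding r_def using assms(2) by simp_all
    ultimately show ?thesis using ZlocI[OF xy(1)] by blast
  qed
qed

lemma Zloc_module_reduce_coeffs:
  fixes n :: nat
  assumes "Zloc_module m S" "0 < m" "\<forall>i<n. g i \<in> S" "\<forall>i<n. c i \<in> Zloc m"
  shows "\<exists>L h. set L \<subseteq> {0..<m} \<and> length L = n \<and> h \<in> S \<and>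
           (\<forall>x. (\<Sum>i<n. c i * g i x) = (\<Sum>i<n. of_int (L ! i) * g i x) + of_int m * h x)"
proof -
  have "\<forall>i<n. \<exists>r z. 0 \<le> r \<and> r < m \<and> z \<in> Zloc m \<and> c i = of_int r + of_int m * z"
    using Zloc_residue assms(2,4) by blast
  then obtain r z where rz: "\<And>i. i < n \<Longrightarrow> 0 \<le> r i \<and> r i < m \<and> z i \<in> Zloc m \<and> c i = of_int (r i) + of_int m * z i"
    by metis
  define L where "L = map r [0..<n]"
  define h where "h x = (\<Sum>i<n. z i * g i x)" for x
  have "h \<in> S"
    unfolding h_def using Zloc_module_sum[OF assms(1,3)] rz by blast
  moreover have "(\<Sum>i<n. c i * g i x) = (\<Sum>i<n. of_int (L ! i) * g i x) + of_int m * h x" for x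
  proof -
    have "(\<Sum>i<n. c i * g i x) = (\<Sum>i<n. of_int (L ! i) * g i x + of_int m * (z i * g i x))"
      by (rule sum.cong[OF refl]) (simp add: L_def rz distrib_right)
    then show ?thesis
      by (simp add: h_def sum.distrib sum_distrib_left)
  qed
  moreover have "set L \<subseteq> {0..<m}" "length L = n"
    unfolding L_def using rz by auto
  ultimately show ?thesis by blast
qed

lemma periodic_mod_if_finitely_many_shift_residues:
  fixes n :: nat
  assumes "finite (range L)" "\<And>k x. h k x \<in> Zloc m"
    and u_shift: "\<And>k x. u (x + int k) = (\<Sum>i<n. of_int (L k ! i) * g i x) + of_int m * h k x"
  shows "\<exists>P>0. \<forall>x. zero_mod m (u (x + int P) - u x)"
proof -
  have "\<not> inj L"
    using assms(1) finite_imageD infinite_UNIV_nat by blast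
  then obtain i j where "i \<noteq> j" "L i = L j"
    unfolding inj_def by blast
  define k1 k2 where "k1 = min i j" and "k2 = max i j"
  have "k1 < k2" "L k1 = L k2"
    using \<open>i \<noteq> j\<close> \<open>L i = L j\<close> unfolding k1_def k2_def by (auto simp: min_def max_def)
  show ?thesis
  proof (intro exI[of _ "k2 - k1"] conjI allI)
    show "0 < k2 - k1" using \<open>k1 < k2\<close> by simp
    fix x
    let ?y = "x - int k1"
    have "u (?y + int k1) = (\<Sum>i<n. of_int (L k1 ! i) * g i ?y) + of_int m * h k1 ?y"
      "u (?y + int k2) = (\<Sum>i<n. of_int (L k1 ! i) * g i ?y) + of_int m * h k2 ?y"
      using u_shift[of ?y k1] u_shift[of ?y k2] unfolding \<open>L k1 = L k2\<close> by simp_all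
    then have "u (x + int (k2 - k1)) - u x = of_int m * (h k2 ?y - h k1 ?y)"
      using \<open>k1 < k2\<close> by (simp add: algebra_simps)
    moreover have "h k2 ?y - h k1 ?y \<in> Zloc m"
      by (intro Zloc_diff assms(2))
    ultimately show "zero_mod m (u (x + int (k2 - k1)) - u x)"
      unfolding zero_mod_iff_Zloc by blast
  qed
qed

lemma periodic_mod_if_shifts_finitely_generated:
  fixes n :: nat
  assumes "Zloc_module m S" "0 < m" "\<forall>i<n. g i \<in> S"
    and spans: "\<And>k::nat. \<exists>c. (\<forall>i<n. c i \<in> Zloc m) \<and> (\<forall>x. u (x + int k) = (\<Sum>i<n. c i * g i x))"
  shows "\<exists>P>0. \<forall>x. zero_mod m (u (x + int P) - u x)"
proof -
  have "\<forall>k. \<exists>L h. (set L \<subseteq> {0..<m} \<and> length L = n) \<and> h \<in> S \<and>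
          (\<forall>x. u (x + int k) = (\<Sum>i<n. of_int (L ! i) * g i x) + of_int m * h x)"
  proof
    fix k
    obtain c where c: "\<forall>i<n. c i \<in> Zloc m" "\<forall>x. u (x + int k) = (\<Sum>i<n. c i * g i x)"
      using spans by blast
    then show "\<exists>L h. (set L \<subseteq> {0..<m} \<and> length L = n) \<and> h \<in> S \<and>
          (\<forall>x. u (x + int k) = (\<Sum>i<n. of_int (L ! i) * g i x) + of_int m * h x)"
      using Zloc_module_reduce_coeffs[OF assms(1-3) c(1)] by simp
  qed
  from choice[OF this] obtain L where "\<forall>k. \<exists>h. (set (L k) \<subseteq> {0..<m} \<and> length (L k) = n) \<and> h \<in> S \<and>
          (\<forall>x. u (x + int k) = (\<Sum>i<n. of_int (L k ! i) * g i x) + of_int m * h x)"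
    by blast
  from choice[OF this] obtain h where "\<forall>k. (set (L k) \<subseteq> {0..<m} \<and> length (L k) = n) \<and> h k \<in> S \<and>
          (\<forall>x. u (x + int k) = (\<Sum>i<n. of_int (L k ! i) * g i x) + of_int m * h k x)"
    by blast
  then have L: "\<And>k. set (L k) \<subseteq> {0..<m} \<and> length (L k) = n" and h: "\<And>k. h k \<in> S"
    and u_shift: "\<And>k x. u (x + int k) = (\<Sum>i<n. of_int (L k ! i) * g i x) + of_int m * h k x"
    by blast+
  have "finite (range L)"
    by (rule finite_subset[OF _ finite_lists_length_eq[of "{0..<m}" n]]) (use L in auto)
  then show ?thesis
    using Zloc_module_values[OF assms(1) h] u_shift by (rule periodic_mod_if_finitely_many_shift_residues)
qed

lemma lin_rec_periodic_mod:
  assumes "lin_rec u d a" "0 < d" "a 0 \<noteq> 0" "\<forall>x. u x \<in> Zloc m" "0 < m"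
  shows "\<exists>P>0. \<forall>x. zero_mod m (u (x + int P) - u x)"
proof -
  let ?S = "shift_span u m"
  have S: "Zloc_module m ?S"
    using assms(4) by (rule Zloc_module_shift_span)
  have "\<exists>(n::nat) g. (\<forall>i<n. g i \<in> ?S) \<and>
          (\<forall>w\<in>?S. \<exists>c. (\<forall>i<n. c i \<in> Zloc m) \<and> w = (\<lambda>x. \<Sum>i<n. c i * g i x))"
  proof (rule Zloc_module_finitely_generated[OF _ S])
    show "finite (int ` {..<d})" by simp
    show "\<forall>w\<in>?S. (\<forall>x\<in>int ` {..<d}. w x = 0) \<longrightarrow> w = (\<lambda>_. 0)"
    proof (intro ballI impI ext)
      fix w x
      assume "w \<in> ?S" "\<forall>x\<in>int ` {..<d}. w x = 0"
      then show "w x = 0"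
        using lin_rec_eq_0_if_initial_values_0[OF lin_rec_shift_span[OF _ assms(1)] assms(2,3)] by simp
    qed
  qed
  then obtain n :: nat and g where g: "\<forall>i<n. g i \<in> ?S"
    and span: "\<forall>w\<in>?S. \<exists>c. (\<forall>i<n. c i \<in> Zloc m) \<and> w = (\<lambda>x. \<Sum>i<n. c i * g i x)"
    by blast
  show ?thesis
  proof (rule periodic_mod_if_shifts_finitely_generated[OF S assms(5) g])
    fix k :: nat
    have "(\<lambda>x. u (x + int k)) \<in> ?S"
      by (rule shift_span.shift)
    then obtain c where "\<forall>i<n. c i \<in> Zloc m" "(\<lambda>x. u (x + int k)) = (\<lambda>x. \<Sum>i<n. c i * g i x)"
      using span by blast
    then show "\<exists>c. (\<forall>i<n. c i \<in> Zloc m) \<and> (\<forall>x. u (x + int k) = (\<Sum>i<n. c i * g i x))"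
      by (auto simp: fun_eq_iff)
  qed
qed

lemma zero_mod_periodic_multiple:
  fixes P j :: int
  assumes "\<forall>x. zero_mod m (u (x + P) - u x)"
  shows "zero_mod m (u (x + P * j) - u x)"
proof (induction j rule: int_induct[where k = 0])
  case base
  then show ?case by simp
next
  case (step1 j)
  have "u (x + P * (j + 1)) - u x = (u (x + P * j + P) - u (x + P * j)) + (u (x + P * j) - u x)"
    by (simp add: algebra_simps)
  then show ?case using assms step1(2) zero_mod_add by metis
next
  case (step2 j)
  have "u (x + P * (j - 1)) - u x = (u (x + P * j) - u x) - (u (x + P * (j - 1) + P) - u (x + P * (j - 1)))"
    by (simp add: algebra_simps)
  then show ?case using assms step2(2) zero_mod_diff by metis
qed

lemma vp_ge_mono: "vp_ge p q r' \<Longrightarrow> r \<le> r' \<Longrightarrow> vp_ge p q r"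
  unfolding vp_ge_def by (erule zero_mod_dvd_modulus) (rule le_imp_power_dvd)

lemma not_vp_ge_imp_pos: "\<not> vp_ge p q r \<Longrightarrow> 0 < r"
  by (cases r) (simp_all add: vp_ge_def)

definition unbounded_vp_on_class :: "nat \<Rightarrow> (int \<Rightarrow> rat) \<Rightarrow> nat \<Rightarrow> int \<Rightarrow> bool" where
  "unbounded_vp_on_class p w r c \<longleftrightarrow> (\<forall>R. \<exists>n. vp_ge p (w n) R \<and> [n = c] (mod int p ^ r))"

lemma unbounded_vp_on_class_lift:
  assumes "0 < p" "unbounded_vp_on_class p w r c"
  shows "\<exists>c'. 0 \<le> c' \<and> c' < int p ^ Suc r \<and> [c' = c] (mod int p ^ r) \<and>
           unbounded_vp_on_class p w (Suc r) c'"
proof (rule ccontr)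
  define C where "C = {c'. 0 \<le> c' \<and> c' < int p ^ Suc r \<and> [c' = c] (mod int p ^ r)}"
  assume "\<not> ?thesis"
  then have "\<forall>c'\<in>C. \<exists>R. \<forall>n. vp_ge p (w n) R \<longrightarrow> \<not> [n = c'] (mod int p ^ Suc r)"
    unfolding C_def unbounded_vp_on_class_def by blast
  then obtain bound where bound: "\<And>c' n. c' \<in> C \<Longrightarrow> vp_ge p (w n) (bound c') \<Longrightarrow> \<not> [n = c'] (mod int p ^ Suc r)"
    by metis
  \<comment> \<open>there are only finitely many lifts, so one valuation bound works for all of them\<close>
  have "finite C"
    unfolding C_def by (rule finite_subset[of _ "{0..<int p ^ Suc r}"]) auto
  obtain n where n: "vp_ge p (w n) (\<Sum>c'\<in>C. bound c')" "[n = c] (mod int p ^ r)"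
    using assms(2) unfolding unbounded_vp_on_class_def by blast
  define c' where "c' = n mod int p ^ Suc r"
  have "[c' = n] (mod int p ^ r)"
    unfolding c'_def cong_def by (simp add: mod_mod_cancel le_imp_power_dvd)
  then have "c' \<in> C"
    unfolding C_def c'_def using assms(1) n(2) cong_trans by auto
  moreover have "vp_ge p (w n) (bound c')"
    using n(1) \<open>c' \<in> C\<close> \<open>finite C\<close> by (auto intro: vp_ge_mono member_le_sum)
  moreover have "[n = c'] (mod int p ^ Suc r)"
    unfolding c'_def by (simp add: cong_def)
  ultimately show False
    using bound by blast
qed

lemma has_padic_zero_if_unbounded_vp:
  assumes "0 < p" and unbounded: "\<forall>r. \<exists>n. vp_ge p (w n) r"
  shows "has_padic_zero p w"
proof -
  \<comment> \<open>Koenig's lemma: descend through residue classes that keep unbounded valuation\<close>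
  obtain c where c: "\<And>r. 0 \<le> c r \<and> c r < int p ^ r \<and> unbounded_vp_on_class p w r (c r)"
    "\<And>r. [c (Suc r) = c r] (mod int p ^ r)"
  proof -
    have "\<exists>c. \<forall>r. (0 \<le> c r \<and> c r < int p ^ r \<and> unbounded_vp_on_class p w r (c r)) \<and>
              [c (Suc r) = c r] (mod int p ^ r)"
    proof (rule dependent_nat_choice)
      show "\<exists>c0. 0 \<le> c0 \<and> c0 < int p ^ 0 \<and> unbounded_vp_on_class p w 0 c0"
        using unbounded unfolding unbounded_vp_on_class_def by (intro exI[of _ 0]) simp
      show "\<exists>c'. (0 \<le> c' \<and> c' < int p ^ Suc r \<and> unbounded_vp_on_class p w (Suc r) c') \<and>
              [c' = c0] (mod int p ^ r)"
        if "0 \<le> c0 \<and> c0 < int p ^ r \<and> unbounded_vp_on_class p w r c0" for c0 r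
        using unbounded_vp_on_class_lift[OF assms(1)] that by blast
    qed
    then show ?thesis using that by blast
  qed
  have "padic_int p c"
    unfolding padic_int_def using c by blast
  moreover have "\<forall>r. \<exists>n. vp_ge p (w n) r \<and> [n = c r] (mod int p ^ r)"
    using c(1) unfolding unbounded_vp_on_class_def by blast
  then obtain ns where "\<forall>r. vp_ge p (w (ns r)) r \<and> [ns r = c r] (mod int p ^ r)"
    by (rule choice[THEN exE])
  ultimately show ?thesis
    unfolding has_padic_zero_def is_padic_zero_def by blast
qed

lemma has_padic_zero_iff_unbounded_vp:
  assumes "0 < p"
  shows "has_padic_zero p w \<longleftrightarrow> (\<forall>r. \<exists>n. vp_ge p (w n) r)"
proof
  assume "has_padic_zero p w"
  then obtain ns where ns: "\<forall>r\<ge>1. vp_ge p (w (ns r)) r"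
    unfolding has_padic_zero_def is_padic_zero_def by blast
  show "\<forall>r. \<exists>n. vp_ge p (w n) r"
  proof
    fix r
    have "vp_ge p (w (ns (Suc r))) (Suc r)"
      using ns by simp
    then have "vp_ge p (w (ns (Suc r))) r"
      by (rule vp_ge_mono) simp
    then show "\<exists>n. vp_ge p (w n) r" ..
  qed
next
  assume "\<forall>r. \<exists>n. vp_ge p (w n) r"
  then show "has_padic_zero p w"
    by (rule has_padic_zero_if_unbounded_vp[OF assms])
qed

lemma values_in_Zb_imp_Zloc:
  assumes "values_in_Zb b u" "coprime b m"
  shows "u x \<in> Zloc m"
proof -
  obtain y k where "u x = of_int y / of_int b ^ k"
    using assms(1) unfolding values_in_Zb_def by blast
  then show ?thesis
    using assms(2) ZlocI[of "b ^ k" m y] by simp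
qed

lemma not_zero_mod_imp_prime_power_factor:
  assumes "q \<in> Zloc m" "m \<noteq> 0" "\<not> zero_mod m q"
  shows "\<exists>p e. prime (p::nat) \<and> int p ^ e dvd m \<and> \<not> zero_mod (int p ^ e) q"
proof -
  obtain x y where xy: "coprime y m" "q = of_int x / of_int y"
    using assms(1) by (rule ZlocE)
  have "\<not> m dvd x"
    using xy assms(3) unfolding zero_mod_def by blast
  have "y \<noteq> 0"
    using xy assms(3) by (cases "y = 0") auto
  have "x \<noteq> 0"
    using \<open>\<not> m dvd x\<close> by auto
  have "\<exists>p'. prime p' \<and> \<not> multiplicity p' m \<le> multiplicity p' x"
    using \<open>\<not> m dvd x\<close> multiplicity_le_imp_dvd[OF assms(2)] by blast
  then obtain p' :: int where p': "prime p'" "multiplicity p' x < multiplicity p' m"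
    by auto
  define e where "e = multiplicity p' m"
  have "p' ^ e dvd m"
    unfolding e_def by (rule multiplicity_dvd)
  moreover have "\<not> p' ^ e dvd x"
    using p' multiplicity_geI[OF \<open>x \<noteq> 0\<close>] not_prime_unit unfolding e_def by (meson not_le)
  moreover have "coprime y (p' ^ e)"
    using xy(1) \<open>p' ^ e dvd m\<close> coprime_divisors dvd_refl by blast
  ultimately have "\<not> zero_mod (p' ^ e) q"
    using zero_mod_imp_dvd_numerator xy(2) \<open>y \<noteq> 0\<close> by blast
  moreover have "int (nat p') = p'"
    using p'(1) by (simp add: prime_ge_0_int)
  ultimately show ?thesis
    using \<open>p' ^ e dvd m\<close> p'(1) by (intro exI[of _ "nat p'"] exI[of _ e]) (simp add: prime_nat_iff_prime)
qed

lemma no_padic_zero_if_periodic_mod: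
  assumes "prime p" "\<forall>x. zero_mod m (u (x + P) - u x)" "int p ^ e dvd m"
    and not_zero: "\<not> zero_mod (int p ^ e) (u l)"
  shows "\<not> has_padic_zero p (\<lambda>n. u (P * n + l))"
proof
  assume "has_padic_zero p (\<lambda>n. u (P * n + l))"
  then obtain n where "vp_ge p (u (P * n + l)) e"
    unfolding has_padic_zero_iff_unbounded_vp[OF prime_gt_0_nat[OF assms(1)]] by blast
  then have "zero_mod (int p ^ e) (u (P * n + l))"
    unfolding vp_ge_def .
  moreover have "zero_mod m (u (l + P * n) - u l)"
    using assms(2) by (rule zero_mod_periodic_multiple)
  then have "zero_mod (int p ^ e) (u (P * n + l) - u l)"
    using assms(3) by (simp add: add.commute zero_mod_dvd_modulus)
  ultimately have "zero_mod (int p ^ e) (u l)"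
    using zero_mod_diff by fastforce
  with not_zero show False ..
qed

lemma modulus_imp_padic_cover:
  assumes "is_LRBS u" "values_in_Zb b u" "2 \<le> m" "coprime b m" "\<forall>n. \<not> zero_mod m (u n)"
  shows "\<exists>(N::nat) (ps::nat list). N \<ge> 1 \<and> (\<forall>p\<in>set ps. prime p \<and> coprime (int p) b) \<and>
           (\<forall>l<N. \<exists>p\<in>set ps. \<not> has_padic_zero p (\<lambda>n. u (int N * n + int l)))"
proof -
  have Zloc: "\<forall>x. u x \<in> Zloc m"
    using values_in_Zb_imp_Zloc[OF assms(2,4)] by blast
  obtain d a where "0 < d" "a 0 \<noteq> 0" "lin_rec u d a"
    using assms(1) unfolding is_LRBS_def by blast
  with Zloc assms(3) obtain P where "0 < P" and period: "\<forall>x. zero_mod m (u (x + int P) - u x)"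
    using lin_rec_periodic_mod[of u d a m] by auto
  define ps where "ps = sorted_list_of_set (prime_factors (nat m))"
  have ps: "p \<in> set ps \<longleftrightarrow> prime p \<and> int p dvd m" for p
    using assms(3) dvd_nat_abs_iff[of p m] unfolding ps_def by (auto simp: in_prime_factors_iff)
  have "prime p \<and> coprime (int p) b" if "p \<in> set ps" for p
    using that assms(4) unfolding ps by (metis coprime_commute coprime_divisors dvd_refl)
  moreover have "\<exists>p\<in>set ps. \<not> has_padic_zero p (\<lambda>n. u (int P * n + int l))" for l
  proof -
    obtain p e where p: "prime p" "int p ^ e dvd m" and not_zero: "\<not> zero_mod (int p ^ e) (u (int l))"
      using not_zero_mod_imp_prime_power_factor[of "u (int l)" m] Zloc assms(3,5) by auto
    have "0 < e"
      using not_zero by (cases e) auto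
    then have "p \<in> set ps"
      unfolding ps using p dvd_trans[of "int p" "int p ^ e" m] by (simp add: dvd_power)
    moreover have "\<not> has_padic_zero p (\<lambda>n. u (int P * n + int l))"
      using no_padic_zero_if_periodic_mod[OF p(1) period p(2) not_zero] .
    ultimately show ?thesis ..
  qed
  ultimately show ?thesis
    using \<open>0 < P\<close> by (intro exI[of _ P] exI[of _ ps]) auto
qed

lemma padic_cover_imp_modulus:
  assumes "N \<ge> 1" and ps: "\<forall>p\<in>set ps. prime p \<and> coprime (int p) b"
    and cover: "\<forall>l<N. \<exists>p\<in>set ps. \<not> has_padic_zero p (\<lambda>n. u (int N * n + int l))"
  shows "\<exists>m::int. m \<ge> 2 \<and> coprime b m \<and> (\<forall>n. \<not> zero_mod m (u n))"
proof -
  have "\<forall>l\<in>{..<N}. \<exists>p. p \<in> set ps \<and> \<not> has_padic_zero p (\<lambda>n. u (int N * n + int l))"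
    using cover by blast
  from bchoice[OF this] obtain p where p: "\<forall>l\<in>{..<N}. p l \<in> set ps \<and>
      \<not> has_padic_zero (p l) (\<lambda>n. u (int N * n + int l))"
    by blast
  then have p_prime: "prime (p l)" and p_coprime: "coprime b (int (p l))" if "l < N" for l
    using ps that by (auto simp: coprime_commute)
  have "\<forall>l\<in>{..<N}. \<exists>r. \<forall>n. \<not> vp_ge (p l) (u (int N * n + int l)) r"
    using p has_padic_zero_iff_unbounded_vp[OF prime_gt_0_nat[OF p_prime]] by simp
  from bchoice[OF this] obtain r where r: "\<forall>l\<in>{..<N}. \<forall>n. \<not> vp_ge (p l) (u (int N * n + int l)) (r l)"
    by blast
  define m where "m = (\<Prod>l<N. int (p l) ^ r l)"
  have dvd_m: "int (p l) ^ r l dvd m" if "l < N" for l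
    unfolding m_def using that by (intro dvd_prodI) auto
  have "0 < m"
    unfolding m_def using p_prime by (intro prod_pos) (simp add: prime_gt_0_nat)
  have "r 0 \<noteq> 0"
    using r \<open>N \<ge> 1\<close> not_vp_ge_imp_pos by fastforce
  have "2 \<le> int (p 0)"
    using p_prime[of 0] \<open>N \<ge> 1\<close> prime_ge_2_nat by fastforce
  also have "\<dots> \<le> int (p 0) ^ r 0"
    using \<open>r 0 \<noteq> 0\<close> \<open>2 \<le> int (p 0)\<close> by (intro self_le_power) simp_all
  also have "\<dots> \<le> m"
    using dvd_m[of 0] \<open>N \<ge> 1\<close> \<open>0 < m\<close> by (intro zdvd_imp_le) simp_all
  finally have "2 \<le> m" .
  moreover have "coprime b m"
    unfolding m_def using p_coprime by (intro prod_coprime_right) simp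
  moreover have "\<not> zero_mod m (u n)" for n
  proof
    assume "zero_mod m (u n)"
    define l where "l = nat (n mod int N)"
    have "l < N" "n = int N * (n div int N) + int l"
      using \<open>N \<ge> 1\<close> unfolding l_def by (simp_all add: nat_less_iff)
    then have "vp_ge (p l) (u (int N * (n div int N) + int l)) (r l)"
      unfolding vp_ge_def using \<open>zero_mod m (u n)\<close> dvd_m zero_mod_dvd_modulus by simp
    then show False
      using r \<open>l < N\<close> by blast
  qed
  ultimately show ?thesis by blast
qed

lemma modulus_iff_padic_cover:
  assumes "is_LRBS u" "values_in_Zb b u"
  shows "(\<exists>m::int. m \<ge> 2 \<and> coprime b m \<and> (\<forall>n. \<not> zero_mod m (u n))) \<longleftrightarrow>
         (\<exists>(N::nat) (ps::nat list). N \<ge> 1 \<and> (\<forall>p\<in>set ps. prime p \<and> coprime (int p) b) \<and>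
           (\<forall>l<N. \<exists>p\<in>set ps. \<not> has_padic_zero p (\<lambda>n. u (int N * n + int l))))"
    (is "?modulus \<longleftrightarrow> ?cover")
proof
  assume ?modulus
  then show ?cover
    using modulus_imp_padic_cover[OF assms] by blast
next
  assume ?cover
  then show ?modulus
    using padic_cover_imp_modulus by blast
qed

theorem mainTheorem6:
  shows "Skolem_Conjecture \<longleftrightarrow> S'"
  unfolding Skolem_Conjecture_def S'_def
  using modulus_iff_padic_cover by (simp add: simple_LRBS_def cong: imp_cong)

end
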